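(* Fix an integer $n\geq 2$. Let $(\Theta,\mathcal{F},\mu)$ be a probability space and $g_n:\Theta\to(0,1]$ a measurable function. Let $(\theta_i)_{i\geq 1}$ be i.i.d. with law $\mu$, set $p_{n,i}=g_n(\theta_i)$, and for each $i\geq1$, independently of everything else given $\theta_i$, sample an Erdős–Rényi graph $G(n,p_{n,i})$ on $[n]=\{1,\dots,n\}$, run a simple symmetric random walk on it started at vertex $1$, and let $\tau_i$ be its first return time to vertex $1$ (with $\tau_i=1$ if vertex $1$ is isolated). Set $\tau_0=0$ and define the state process $P_{n,t}=\theta_i$ whenever $\sum_{k=0}^{i-1}\tau_k<t\leq\sum_{k=0}^{i}\tau_k$, $i\ge1$, and the empirical occupation measure $\mu_{n,T}(A)=\frac1T\sum_{t=1}^T\mathbf{1}_{\{P_{n,t}\in A\}}$ for $A\in\mathcal{F}$, $T\geq1$. Then for every $A\in\mathcal{F}$, almost surely as $T\to\infty$, $$\mu_{n,T}(A)\longrightarrow \mu_{n,\infty}(A):=\frac{\int_A \mathbb{E}_{n,g_n(\theta)}[\tau]\,\mu(d\theta)}{\int_\Theta \mathbb{E}_{n,g_n(\theta)}[\tau]\,\mu(d\theta)}.$$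
   Context: $G(n,p)$ denotes the Erdős–Rényi random graph on vertex set $[n]$ in which each of the $\binom n2$ edges is present independently with probability $p$. Given a realization $g$, $X=(X_t)_{t\ge0}$ is the simple symmetric random walk on $g$ with $X_0=1$ (at each step it moves to a uniformly chosen neighbor of the current vertex), and $\tau=\inf\{t\geq1: X_t=1\}$, with the convention $\tau=1$ when vertex $1$ has no neighbors. $\mathbb{E}_g[\tau]$ is the expectation over the walk for fixed $g$, and $\mathbb{E}_{n,p}[\tau]:=\mathbb{E}_{n,p}[\mathbb{E}_{G(n,p)}[\tau]]$, the expectation further averaged over the random graph $G(n,p)$. *)

theory Defs
  imports "HOL-Probability.Probability"
begin

definition all_edges :: "nat \<Rightarrow> nat set set" where
  "all_edges n = {e. \<exists>u v. e = {u, v} \<and> u \<noteq> v \<and> u \<in> {1..n} \<and> v \<in> {1..n}}"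

definition er_prob :: "nat \<Rightarrow> real \<Rightarrow> nat set set \<Rightarrow> real" where
  "er_prob n p E = p ^ card E * (1 - p) ^ (card (all_edges n) - card E)"

definition nbrs :: "nat set set \<Rightarrow> nat \<Rightarrow> nat set" where
  "nbrs E v = {u. {u, v} \<in> E}"

definition deg :: "nat set set \<Rightarrow> nat \<Rightarrow> nat" where
  "deg E v = card (nbrs E v)"

definition return_walks :: "nat \<Rightarrow> nat set set \<Rightarrow> nat \<Rightarrow> nat list set" where
  "return_walks n E k = {vs. set vs \<subseteq> {1..n} \<and> length vs = k + 1 \<and> vs ! 0 = 1 \<and> vs ! k = 1
      \<and> (\<forall>j. 0 < j \<and> j < k \<longrightarrow> vs ! j \<noteq> 1)
      \<and> (\<forall>j < k. {vs ! j, vs ! Suc j} \<in> E)}"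

definition ret_prob :: "nat \<Rightarrow> nat set set \<Rightarrow> nat \<Rightarrow> real" where
  "ret_prob n E k =
     (if deg E 1 = 0 then (if k = 1 then 1 else 0)
      else if k = 0 then 0
      else (\<Sum>vs\<in>return_walks n E k. \<Prod>j<k. 1 / real (deg E (vs ! j))))"

definition exp_ret :: "nat \<Rightarrow> nat set set \<Rightarrow> real" where
  "exp_ret n E = (\<Sum>k. real k * ret_prob n E k)"

definition tau_dist :: "nat \<Rightarrow> real \<Rightarrow> nat \<Rightarrow> real" where
  "tau_dist n p k = (\<Sum>E\<in>Pow (all_edges n). er_prob n p E * ret_prob n E k)"

definition exp_tau :: "nat \<Rightarrow> real \<Rightarrow> real" where
  "exp_tau n p = (\<Sum>E\<in>Pow (all_edges n). er_prob n p E * exp_ret n E)"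

definition psum :: "(nat \<Rightarrow> nat) \<Rightarrow> nat \<Rightarrow> nat" where
  "psum tau i = (\<Sum>k\<in>{1..i}. tau k)"

definition state_proc :: "(nat \<Rightarrow> 'a) \<Rightarrow> (nat \<Rightarrow> nat) \<Rightarrow> nat \<Rightarrow> 'a" where
  "state_proc theta tau t =
     theta (THE i. 1 \<le> i \<and> psum tau (i - 1) < t \<and> t \<le> psum tau i)"

definition occupation :: "(nat \<Rightarrow> 'a) \<Rightarrow> (nat \<Rightarrow> nat) \<Rightarrow> 'a set \<Rightarrow> nat \<Rightarrow> real" where
  "occupation theta tau A T =
     real (card {t \<in> {1..T}. state_proc theta tau t \<in> A}) / real T"

end

(*
  Let S_N and R_N be the sums of tau_i and of tau_i * 1_A(theta_i) over the first N cycles. During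
  cycle N + 1 we have S_N <= T < S_(N+1), and between R_N and R_(N+1) of the first T steps are
  spent in A, so mu_(n,T)(A) lies between R_N / S_(N+1) and R_(N+1) / S_N. It therefore suffices
  that R_N / N and S_N / N converge almost surely to the means of tau_i * 1_A(theta_i) and of
  tau_i, which are the two integrals of the theorem. The summands are independent, and their second
  moments are bounded uniformly in the edge probability: on a fixed graph, from every vertex from
  which the walk can reach vertex 1 at all, it does so within m steps with probability at least
  1 - c > 0, so the return time has a geometric tail. For such summands the strong law holds along
  the squares k^2, where the second moments of the normalised deviations are summable, and extends
  to all N by monotone interpolation between consecutive squares.
*)

theory Submission
  imports Defs "HOL-Library.Discrete_Functions" "HOL-Real_Asymp.Real_Asymp"
begin

section \<open>Return times of the random walk\<close>

lemma power_div_le_root_power: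
  fixes c :: real
  assumes "0 \<le> c" "c \<le> 1" "m > 0"
  shows "c ^ (k div m) * c \<le> root m c ^ k"
proof -
  have r: "0 \<le> root m c" "root m c \<le> 1" "root m c ^ m = c" using assms by auto
  have "k \<le> m * (k div m) + m"
    using mod_less_divisor[OF assms(3), of k] mult_div_mod_eq[of m k] by linarith
  then have "root m c ^ (m * (k div m) + m) \<le> root m c ^ k"
    using r by (intro power_decreasing) auto
  moreover have "root m c ^ (m * (k div m) + m) = c ^ (k div m) * c"
    by (simp only: power_add power_mult r(3))
  ultimately show ?thesis by simp
qed

lemma sum_div_card_le_1:
  assumes "finite T" "S \<subseteq> T" "\<And>u. u \<in> S \<Longrightarrow> f u \<le> (1::real)"
  shows "(\<Sum>u\<in>S. f u) / real (card T) \<le> 1"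
proof -
  have "(\<Sum>u\<in>S. f u) \<le> real (card S)"
    using assms(3) sum_bounded_above[of S f 1] by simp
  also have "\<dots> \<le> real (card T)" using card_mono[OF assms(1,2)] by simp
  finally show ?thesis by (cases "card T = 0") (simp_all add: divide_le_eq_1)
qed

lemma summable_power2_mult_geometric:
  fixes \<rho> :: real
  assumes "0 \<le> \<rho>" "\<rho> < 1"
  shows "summable (\<lambda>k. real k ^ 2 * \<rho> ^ k)"
proof (rule root_test_convergence)
  have "(\<lambda>k. root k (real k) ^ 2 * \<rho>) \<longlonglongrightarrow> 1 ^ 2 * \<rho>"
    by (intro tendsto_intros LIMSEQ_root)
  moreover have "\<forall>\<^sub>F k in sequentially. root k (real k) ^ 2 * \<rho> = root k (norm (real k ^ 2 * \<rho> ^ k))"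
    using eventually_gt_at_top[of "0::nat"]
    by eventually_elim (use assms in \<open>simp add: real_root_mult real_root_power real_root_power_cancel\<close>)
  ultimately show "(\<lambda>k. root k (norm (real k ^ 2 * \<rho> ^ k))) \<longlonglongrightarrow> \<rho>"
    by (simp add: tendsto_cong)
qed (fact assms(2))

lemma nbrs_subset: "E \<subseteq> all_edges n \<Longrightarrow> nbrs E v \<subseteq> {1..n}"
  by (auto simp: nbrs_def all_edges_def doubleton_eq_iff)

lemma finite_nbrs: "E \<subseteq> all_edges n \<Longrightarrow> finite (nbrs E v)"
  by (rule finite_subset[OF nbrs_subset]) auto

lemma nbrs_sym: "u \<in> nbrs E v \<longleftrightarrow> v \<in> nbrs E u"
  by (simp add: nbrs_def insert_commute)

text \<open>Unlike \<^const>\<open>return_walks\<close>, the start vertex is arbitrary, so that a walk can be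
  decomposed at its first step.\<close>
definition first_passage_walks :: "nat \<Rightarrow> nat set set \<Rightarrow> nat \<Rightarrow> nat \<Rightarrow> nat list set" where
  "first_passage_walks n E v k = {vs. set vs \<subseteq> {1..n} \<and> length vs = k + 1 \<and> vs ! 0 = v \<and> vs ! k = 1
      \<and> (\<forall>j. 0 < j \<and> j < k \<longrightarrow> vs ! j \<noteq> 1)
      \<and> (\<forall>j < k. {vs ! j, vs ! Suc j} \<in> E)}"

definition walk_weight :: "nat set set \<Rightarrow> nat list \<Rightarrow> nat \<Rightarrow> real" where
  "walk_weight E vs k = (\<Prod>j<k. 1 / real (deg E (vs ! j)))"

text \<open>The probability that the walk from \<open>v\<close> is at vertex 1 at time \<open>k\<close> but not at the times
  \<open>1, \<dots>, k - 1\<close>.\<close>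
fun first_hit_prob :: "nat set set \<Rightarrow> nat \<Rightarrow> nat \<Rightarrow> real" where
  "first_hit_prob E 0 v = (if v = 1 then 1 else 0)"
| "first_hit_prob E (Suc k) v =
     (\<Sum>u\<in>{u \<in> nbrs E v. u = 1 \<longrightarrow> k = 0}. first_hit_prob E k u) / real (deg E v)"

lemma finite_first_passage_walks: "finite (first_passage_walks n E v k)"
proof (rule finite_subset)
  show "first_passage_walks n E v k \<subseteq> {vs. set vs \<subseteq> {1..n} \<and> length vs = k + 1}"
    by (auto simp: first_passage_walks_def)
qed (simp add: finite_lists_length_eq)

lemma first_passage_walks_0:
  "first_passage_walks n E v 0 = (if v = 1 \<and> v \<in> {1..n} then {[1]} else {})"
  by (auto simp: first_passage_walks_def length_Suc_conv)

lemma first_passage_walks_Suc: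
  assumes "v \<in> {1..n}" "E \<subseteq> all_edges n"
  shows "first_passage_walks n E v (Suc k) =
    (\<lambda>(u, vs). v # vs) ` (SIGMA u:{u \<in> nbrs E v. u = 1 \<longrightarrow> k = 0}. first_passage_walks n E u k)"
    (is "?W = ?R")
proof
  show "?W \<subseteq> ?R"
  proof
    fix xs assume xs: "xs \<in> ?W"
    then obtain vs where xs_eq: "xs = v # vs"
      by (cases xs) (auto simp: first_passage_walks_def)
    have avoid: "vs ! j \<noteq> 1" and edge: "{vs ! j, vs ! Suc j} \<in> E" if "j < k" for j
      using xs that unfolding first_passage_walks_def xs_eq
      by (auto dest!: spec[of _ "Suc j"])
    have "{v, vs ! 0} \<in> E" using xs unfolding first_passage_walks_def xs_eq by (auto dest!: spec[of _ 0])
    then have nbr: "vs ! 0 \<in> nbrs E v" by (simp add: nbrs_def insert_commute)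
    have "vs \<in> first_passage_walks n E (vs ! 0) k"
      using xs avoid edge unfolding first_passage_walks_def xs_eq by auto
    then show "xs \<in> ?R" using nbr avoid[of 0] xs_eq by (intro image_eqI[of _ _ "(vs ! 0, vs)"]) auto
  qed
next
  show "?R \<subseteq> ?W"
  proof
    fix xs assume "xs \<in> ?R"
    then obtain u vs where xs_eq: "xs = v # vs" and u: "u \<in> nbrs E v" "u = 1 \<longrightarrow> k = 0"
      and vs: "vs \<in> first_passage_walks n E u k" by auto
    show "xs \<in> ?W"
      unfolding first_passage_walks_def
    proof (intro CollectI conjI allI impI)
      show "set xs \<subseteq> {1..n}" "length xs = Suc k + 1" "xs ! 0 = v" "xs ! Suc k = 1"
        using vs assms(1) xs_eq by (auto simp: first_passage_walks_def)
      fix j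
      show "xs ! j \<noteq> 1" if j: "0 < j \<and> j < Suc k"
      proof (cases "j = 1")
        case True
        then show ?thesis using vs u j xs_eq by (auto simp: first_passage_walks_def)
      next
        case False
        then show ?thesis using vs j xs_eq by (auto simp: first_passage_walks_def nth_Cons')
      qed
      show "{xs ! j, xs ! Suc j} \<in> E" if "j < Suc k"
      proof (cases j)
        case 0
        then show ?thesis using vs u xs_eq by (simp add: first_passage_walks_def nbrs_def insert_commute)
      next
        case (Suc j')
        then show ?thesis using vs that xs_eq by (simp add: first_passage_walks_def)
      qed
    qed
  qed
qed

lemma sum_walk_weight_first_passage_walks:
  assumes "E \<subseteq> all_edges n" "v \<in> {1..n}"
  shows "(\<Sum>vs\<in>first_passage_walks n E v k. walk_weight E vs k) = first_hit_prob E k v"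
  using assms(2)
proof (induction k arbitrary: v)
  case 0
  then show ?case by (simp add: first_passage_walks_0 walk_weight_def)
next
  case (Suc k)
  let ?U = "{u \<in> nbrs E v. u = 1 \<longrightarrow> k = 0}"
  have U: "finite ?U" "?U \<subseteq> {1..n}"
    using finite_nbrs[OF assms(1), of v] nbrs_subset[OF assms(1), of v] by auto
  have "inj_on (\<lambda>(u, vs). v # vs) (SIGMA u:?U. first_passage_walks n E u k)"
    by (auto simp: inj_on_def first_passage_walks_def)
  then have "(\<Sum>vs\<in>first_passage_walks n E v (Suc k). walk_weight E vs (Suc k))
      = (\<Sum>(u, vs)\<in>(SIGMA u:?U. first_passage_walks n E u k). walk_weight E (v # vs) (Suc k))"
    unfolding first_passage_walks_Suc[OF Suc.prems assms(1)]
    by (subst sum.reindex) (simp_all add: case_prod_unfold)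
  also have "\<dots> = (\<Sum>u\<in>?U. \<Sum>vs\<in>first_passage_walks n E u k. walk_weight E (v # vs) (Suc k))"
    by (rule sum.Sigma[symmetric]) (rule U(1), simp add: finite_first_passage_walks)
  also have "\<dots> = (\<Sum>u\<in>?U. \<Sum>vs\<in>first_passage_walks n E u k. walk_weight E vs k) / real (deg E v)"
    by (simp add: walk_weight_def prod.lessThan_Suc_shift sum_divide_distrib del: prod.lessThan_Suc)
  also have "\<dots> = first_hit_prob E (Suc k) v"
    using U(2) Suc.IH by (simp add: subset_iff)
  finally show ?case .
qed

lemma ret_prob_eq_first_hit_prob:
  assumes "E \<subseteq> all_edges n" "n \<ge> 1" "deg E 1 \<noteq> 0" "k \<noteq> 0"
  shows "ret_prob n E k = first_hit_prob E k 1"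
  using sum_walk_weight_first_passage_walks[OF assms(1), of 1 k] assms
  by (simp add: ret_prob_def return_walks_def first_passage_walks_def walk_weight_def)

text \<open>The probability that the walk from \<open>v\<close> avoids vertex 1 at the times \<open>1, \<dots>, k\<close>.\<close>
fun avoid_prob :: "nat set set \<Rightarrow> nat \<Rightarrow> nat \<Rightarrow> real" where
  "avoid_prob E 0 v = 1"
| "avoid_prob E (Suc k) v = (\<Sum>u\<in>nbrs E v - {1}. avoid_prob E k u) / real (deg E v)"

context
  fixes n :: nat and E :: "nat set set"
  assumes E: "E \<subseteq> all_edges n"
begin

lemma avoid_prob_nonneg: "0 \<le> avoid_prob E k v"
  by (induction k arbitrary: v) (auto intro!: sum_nonneg divide_nonneg_nonneg)

lemma avoid_prob_le_1: "avoid_prob E k v \<le> 1"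
proof (induction k arbitrary: v)
  case (Suc k)
  have "(\<Sum>u\<in>nbrs E v - {1}. avoid_prob E k u) / real (card (nbrs E v)) \<le> 1"
    using Suc.IH by (intro sum_div_card_le_1 finite_nbrs[OF E]) auto
  then show ?case by (simp add: deg_def)
qed simp

lemma avoid_prob_Suc_le: "avoid_prob E (Suc k) v \<le> avoid_prob E k v"
proof (induction k arbitrary: v)
  case 0
  then show ?case using avoid_prob_le_1[of 1 v] by simp
next
  case (Suc k)
  have "(\<Sum>u\<in>nbrs E v - {1}. avoid_prob E (Suc k) u) \<le> (\<Sum>u\<in>nbrs E v - {1}. avoid_prob E k u)"
    using Suc.IH by (intro sum_mono)
  then show ?case by (simp add: divide_right_mono)
qed

lemma avoid_prob_antimono: "k \<le> k' \<Longrightarrow> avoid_prob E k' v \<le> avoid_prob E k v"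
proof (induction k' rule: dec_induct)
  case (step k')
  then show ?case using avoid_prob_Suc_le[of k' v] by linarith
qed simp

lemma first_hit_prob_Suc_le_avoid_prob: "first_hit_prob E (Suc k) v \<le> avoid_prob E k v"
proof (induction k arbitrary: v)
  case 0
  have "(\<Sum>u\<in>{u \<in> nbrs E v. u = 1 \<longrightarrow> 0 = (0::nat)}. first_hit_prob E 0 u) / real (card (nbrs E v)) \<le> 1"
    by (intro sum_div_card_le_1 finite_nbrs[OF E]) auto
  then show ?case by (simp add: deg_def)
next
  case (Suc k)
  have "{u \<in> nbrs E v. u = 1 \<longrightarrow> Suc k = 0} = nbrs E v - {1}" by auto
  then show ?case
    using Suc.IH by (simp only: first_hit_prob.simps avoid_prob.simps) (intro divide_right_mono sum_mono, auto)
qed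

text \<open>The first step from \<open>u\<close> goes to \<open>v\<close> with positive probability.\<close>
lemma avoid_prob_Suc_less_1:
  assumes u: "u \<in> nbrs E v" and v: "v = 1 \<or> avoid_prob E m v < 1"
  shows "avoid_prob E (Suc m) u < 1"
proof -
  have vu: "v \<in> nbrs E u" using u nbrs_sym by blast
  have fin: "finite (nbrs E u)" by (rule finite_nbrs[OF E])
  have "(\<Sum>w\<in>nbrs E u - {1}. avoid_prob E m w) < real (card (nbrs E u))"
  proof (cases "v = 1")
    case True
    have "(\<Sum>w\<in>nbrs E u - {1}. avoid_prob E m w) \<le> real (card (nbrs E u - {1}))"
      using avoid_prob_le_1 sum_bounded_above[of "nbrs E u - {1}" "avoid_prob E m" 1] by simp
    also have "\<dots> < real (card (nbrs E u))"
      using card_Diff1_less[OF fin, of 1] vu True by simp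
    finally show ?thesis .
  next
    case False
    then have "v \<in> nbrs E u - {1}" using vu by simp
    then have "(\<Sum>w\<in>nbrs E u - {1}. avoid_prob E m w)
        = avoid_prob E m v + (\<Sum>w\<in>nbrs E u - {1} - {v}. avoid_prob E m w)"
      using fin by (simp add: sum.remove)
    also have "\<dots> < 1 + real (card (nbrs E u - {1} - {v}))"
      using False v avoid_prob_le_1 sum_bounded_above[of "nbrs E u - {1} - {v}" "avoid_prob E m" 1]
      by simp
    also have "\<dots> \<le> real (card (nbrs E u))"
    proof -
      have "card (nbrs E u - {1} - {v}) < card (nbrs E u)"
        using fin vu by (intro psubset_card_mono) auto
      then show ?thesis by linarith
    qed
    finally show ?thesis .
  qed
  moreover have "0 < card (nbrs E u)" using vu fin card_gt_0_iff by blast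
  ultimately show ?thesis by (simp add: deg_def divide_less_eq_1)
qed

definition reaching_one :: "nat set" where
  "reaching_one = {v \<in> {1..n}. \<exists>m. avoid_prob E m v < 1}"

lemma reaching_one_closed:
  assumes "u \<in> nbrs E v" "v = 1 \<or> v \<in> reaching_one"
  shows "u \<in> reaching_one"
proof -
  obtain m where "v = 1 \<or> avoid_prob E m v < 1"
    using assms(2) by (auto simp: reaching_one_def)
  then have "avoid_prob E (Suc m) u < 1" by (rule avoid_prob_Suc_less_1[OF assms(1)])
  moreover have "u \<in> {1..n}" using nbrs_subset[OF E] assms(1) by blast
  ultimately show ?thesis unfolding reaching_one_def by blast
qed

lemma avoid_prob_uniformly_less_1:
  obtains m c where "m > 0" "0 < c" "c < 1" "\<And>v. v \<in> reaching_one \<Longrightarrow> avoid_prob E m v \<le> c"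
proof -
  have fin: "finite reaching_one" by (simp add: reaching_one_def)
  have "\<forall>v\<in>reaching_one. \<exists>m. avoid_prob E m v < 1" by (simp add: reaching_one_def)
  from bchoice[OF this] obtain mv where mv: "\<forall>v\<in>reaching_one. avoid_prob E (mv v) v < 1" ..
  define m where "m = Suc (Max (mv ` reaching_one))"
  have less: "avoid_prob E m v < 1" if v: "v \<in> reaching_one" for v
  proof -
    have "mv v \<le> m" using fin v by (simp add: m_def le_SucI)
    then show ?thesis using mv v avoid_prob_antimono[of "mv v" m v] by fastforce
  qed
  define c where "c = Max (insert (1/2) ((\<lambda>v. avoid_prob E m v) ` reaching_one))"
  have "0 < m" by (simp add: m_def)
  moreover have "0 < c" "c < 1" using fin less by (simp_all add: c_def Max_gr_iff)
  moreover have "avoid_prob E m v \<le> c" if "v \<in> reaching_one" for v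
    using fin that by (simp add: c_def)
  ultimately show thesis by (rule that)
qed

lemma avoid_prob_le_power_div:
  assumes c: "0 \<le> c" "\<And>v. v \<in> reaching_one \<Longrightarrow> avoid_prob E m v \<le> c"
    and v: "v \<in> reaching_one"
  shows "avoid_prob E k v \<le> c ^ (k div m)"
proof -
  have step: "avoid_prob E (k + m) v \<le> c * avoid_prob E k v" if "v \<in> reaching_one" for k v
    using that
  proof (induction k arbitrary: v)
    case (Suc k)
    have "(\<Sum>u\<in>nbrs E v - {1}. avoid_prob E (k + m) u) \<le> (\<Sum>u\<in>nbrs E v - {1}. c * avoid_prob E k u)"
      by (intro sum_mono Suc.IH reaching_one_closed[of _ v]) (use Suc.prems in auto)
    also have "\<dots> = c * (\<Sum>u\<in>nbrs E v - {1}. avoid_prob E k u)" by (simp add: sum_distrib_left)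
    finally show ?case by (simp add: divide_right_mono)
  qed (use c in simp)
  have pow: "avoid_prob E (m * j) v \<le> c ^ j" if "v \<in> reaching_one" for j v
    using that
  proof (induction j arbitrary: v)
    case (Suc j)
    have "avoid_prob E (m * j + m) v \<le> c * avoid_prob E (m * j) v" by (rule step[OF Suc.prems])
    also have "\<dots> \<le> c * c ^ j" using Suc c(1) by (intro mult_left_mono) auto
    finally show ?case by (simp add: add.commute)
  qed simp
  have "avoid_prob E k v \<le> avoid_prob E (m * (k div m)) v"
    by (rule avoid_prob_antimono) simp
  also have "\<dots> \<le> c ^ (k div m)" by (rule pow[OF v])
  finally show ?thesis .
qed

lemma one_reaching_one:
  assumes "n \<ge> 1"
  shows "1 \<in> reaching_one"
proof (cases "deg E 1 = 0")
  case True
  then have "avoid_prob E 1 1 < 1" by simp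
  then have "\<exists>m. avoid_prob E m 1 < 1" ..
  then show ?thesis using assms by (simp add: reaching_one_def)
next
  case False
  have fin: "finite (nbrs E 1)" by (rule finite_nbrs[OF E])
  have "1 \<notin> nbrs E 1" using E by (auto simp: nbrs_def all_edges_def doubleton_eq_iff)
  then have "nbrs E 1 - {1} = nbrs E 1" by simp
  moreover have "(\<Sum>u\<in>nbrs E 1. avoid_prob E 1 u) < (\<Sum>u\<in>nbrs E 1. 1)"
    using False fin avoid_prob_Suc_less_1[of _ 1 0]
    by (intro sum_strict_mono) (auto simp: deg_def)
  ultimately have "avoid_prob E 2 1 < 1"
    using False by (simp add: numeral_2_eq_2 deg_def divide_less_eq_1)
  then have "\<exists>m. avoid_prob E m 1 < 1" ..
  then show ?thesis using assms by (simp add: reaching_one_def)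
qed

lemma ret_prob_Suc_le_avoid_prob:
  assumes "n \<ge> 1"
  shows "ret_prob n E (Suc k) \<le> avoid_prob E k 1"
proof (cases "deg E 1 = 0")
  case True
  then show ?thesis using avoid_prob_nonneg by (simp add: ret_prob_def)
next
  case False
  then show ?thesis
    using ret_prob_eq_first_hit_prob[OF E assms False] first_hit_prob_Suc_le_avoid_prob by simp
qed

lemma ret_prob_geometric_tail:
  assumes "n \<ge> 1"
  obtains \<rho> C where "0 \<le> \<rho>" "\<rho> < (1::real)" "\<And>k. ret_prob n E k \<le> C * \<rho> ^ k"
proof -
  obtain m c where m: "m > 0" and c: "0 < c" "c < 1"
    and uniform: "\<And>v. v \<in> reaching_one \<Longrightarrow> avoid_prob E m v \<le> c"
    using avoid_prob_uniformly_less_1 by blast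
  define \<rho> where "\<rho> = root m c"
  have \<rho>: "0 < \<rho>" "\<rho> < 1" using m c by (auto simp: \<rho>_def)
  have "ret_prob n E k \<le> 1 / (c * \<rho>) * \<rho> ^ k" for k
  proof (cases k)
    case 0
    then show ?thesis using c \<rho> by (simp add: ret_prob_def)
  next
    case (Suc j)
    have "ret_prob n E (Suc j) \<le> avoid_prob E j 1"
      by (rule ret_prob_Suc_le_avoid_prob[OF assms])
    also have "\<dots> \<le> c ^ (j div m)"
      using c(1) by (intro avoid_prob_le_power_div[OF _ uniform one_reaching_one[OF assms]]) simp
    also have "\<dots> \<le> \<rho> ^ j / c"
      using power_div_le_root_power[of c m j] m c by (simp add: \<rho>_def pos_le_divide_eq)
    also have "\<dots> = 1 / (c * \<rho>) * \<rho> ^ k" using Suc \<rho> by simp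
    finally show ?thesis using Suc by simp
  qed
  with \<rho> show thesis by (intro that[of \<rho> "1 / (c * \<rho>)"]) auto
qed

end

lemma ret_prob_nonneg: "0 \<le> ret_prob n E k"
  by (auto simp: ret_prob_def intro!: sum_nonneg prod_nonneg)

lemma summable_power2_mult_ret_prob:
  assumes "E \<subseteq> all_edges n" "n \<ge> 1"
  shows "summable (\<lambda>k. real k ^ 2 * ret_prob n E k)"
proof -
  obtain \<rho> C where \<rho>: "0 \<le> \<rho>" "\<rho> < 1" and C: "\<And>k. ret_prob n E k \<le> C * \<rho> ^ k"
    using ret_prob_geometric_tail[OF assms] by metis
  show ?thesis
  proof (rule summable_comparison_test'[where N = 0])
    show "summable (\<lambda>k. C * (real k ^ 2 * \<rho> ^ k))"
      using summable_power2_mult_geometric[OF \<rho>] by (rule summable_mult)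
    fix k
    have "norm (real k ^ 2 * ret_prob n E k) = real k ^ 2 * ret_prob n E k"
      using ret_prob_nonneg[of n E k] by simp
    also have "\<dots> \<le> real k ^ 2 * (C * \<rho> ^ k)" by (rule mult_left_mono[OF C]) simp
    also have "\<dots> = C * (real k ^ 2 * \<rho> ^ k)" by (rule mult.left_commute)
    finally show "norm (real k ^ 2 * ret_prob n E k) \<le> C * (real k ^ 2 * \<rho> ^ k)" .
  qed
qed

lemma summable_mult_ret_prob:
  assumes "E \<subseteq> all_edges n" "n \<ge> 1"
  shows "summable (\<lambda>k. real k * ret_prob n E k)"
proof (rule summable_comparison_test'[OF summable_power2_mult_ret_prob[OF assms], where N = 0])
  fix k
  have "real k \<le> real k ^ 2"
    unfolding power2_eq_square of_nat_mult[symmetric] of_nat_le_iff by (rule le_square)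
  from mult_right_mono[OF this ret_prob_nonneg]
  show "norm (real k * ret_prob n E k) \<le> real k ^ 2 * ret_prob n E k"
    using ret_prob_nonneg[of n E k] by simp
qed

lemma er_prob_nonneg: "0 \<le> p \<Longrightarrow> p \<le> 1 \<Longrightarrow> 0 \<le> er_prob n p E"
  by (simp add: er_prob_def)

lemma er_prob_le_1: "0 \<le> p \<Longrightarrow> p \<le> 1 \<Longrightarrow> er_prob n p E \<le> 1"
  unfolding er_prob_def by (intro mult_le_one power_le_one) auto

lemma tau_dist_nonneg: "0 \<le> p \<Longrightarrow> p \<le> 1 \<Longrightarrow> 0 \<le> tau_dist n p k"
  unfolding tau_dist_def by (intro sum_nonneg mult_nonneg_nonneg er_prob_nonneg ret_prob_nonneg)

lemma tau_dist_0: "tau_dist n p 0 = 0"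
proof -
  have "ret_prob n E 0 = 0" for E by (simp add: ret_prob_def)
  then show ?thesis by (simp add: tau_dist_def)
qed

lemma tau_dist_le_sum_ret_prob:
  assumes "0 \<le> p" "p \<le> 1"
  shows "tau_dist n p k \<le> (\<Sum>E\<in>Pow (all_edges n). ret_prob n E k)"
  unfolding tau_dist_def
  by (intro sum_mono mult_left_le_one_le ret_prob_nonneg er_prob_nonneg er_prob_le_1 assms)

lemma summable_power2_mult_sum_ret_prob:
  assumes "n \<ge> 1"
  shows "summable (\<lambda>k. real k ^ 2 * (\<Sum>E\<in>Pow (all_edges n). ret_prob n E k))"
  unfolding sum_distrib_left
  by (intro summable_sum summable_power2_mult_ret_prob assms) simp

lemma tau_second_moment_le:
  assumes "n \<ge> 1" "0 \<le> p" "p \<le> 1"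
  shows "(\<Sum>k. ennreal (real k ^ 2) * ennreal (tau_dist n p k))
    \<le> ennreal (\<Sum>k. real k ^ 2 * (\<Sum>E\<in>Pow (all_edges n). ret_prob n E k))"
proof -
  have "(\<Sum>k. ennreal (real k ^ 2) * ennreal (tau_dist n p k))
      \<le> (\<Sum>k. ennreal (real k ^ 2 * (\<Sum>E\<in>Pow (all_edges n). ret_prob n E k)))"
    using tau_dist_le_sum_ret_prob[OF assms(2,3)]
    by (intro suminf_le summableI)
      (auto simp: ennreal_mult[symmetric] tau_dist_nonneg[OF assms(2,3)] intro!: ennreal_leI mult_left_mono)
  also have "\<dots> = ennreal (\<Sum>k. real k ^ 2 * (\<Sum>E\<in>Pow (all_edges n). ret_prob n E k))"
    using summable_power2_mult_sum_ret_prob[OF assms(1)]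
    by (intro suminf_ennreal2) (auto simp: sum_nonneg ret_prob_nonneg)
  finally show ?thesis .
qed

lemma sums_exp_tau:
  assumes "n \<ge> 1"
  shows "(\<lambda>k. real k * tau_dist n p k) sums exp_tau n p"
proof -
  have "(\<lambda>k. er_prob n p E * (real k * ret_prob n E k)) sums (er_prob n p E * exp_ret n E)"
    if "E \<in> Pow (all_edges n)" for E
    unfolding exp_ret_def
    using summable_mult_ret_prob[OF _ assms] that by (intro sums_mult summable_sums) auto
  then have "(\<lambda>k. \<Sum>E\<in>Pow (all_edges n). er_prob n p E * (real k * ret_prob n E k)) sums exp_tau n p"
    unfolding exp_tau_def by (rule sums_sum)
  then show ?thesis by (simp add: tau_dist_def sum_distrib_left mult.left_commute)
qed

lemma exp_tau_nonneg:
  assumes "n \<ge> 1" "0 \<le> p" "p \<le> 1"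
  shows "0 \<le> exp_tau n p"
  by (rule sums_le[OF _ sums_zero sums_exp_tau[OF assms(1)]]) (simp add: tau_dist_nonneg[OF assms(2,3)])

lemma exp_tau_le_sum_exp_ret:
  assumes "n \<ge> 1" "0 \<le> p" "p \<le> 1"
  shows "exp_tau n p \<le> (\<Sum>E\<in>Pow (all_edges n). exp_ret n E)"
  unfolding exp_tau_def exp_ret_def
  using summable_mult_ret_prob[OF _ assms(1)] ret_prob_nonneg
  by (intro sum_mono mult_left_le_one_le er_prob_nonneg er_prob_le_1 assms suminf_nonneg) auto

section \<open>A strong law of large numbers\<close>

lemma filterlim_floor_sqrt: "filterlim floor_sqrt at_top sequentially"
  unfolding filterlim_at_top
proof
  fix Z :: nat
  show "\<forall>\<^sub>F N in sequentially. Z \<le> floor_sqrt N"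
    using eventually_ge_at_top[of "Z\<^sup>2"] by eventually_elim (rule le_floor_sqrtI)
qed

lemma mono_average_tendsto_from_squares:
  fixes S :: "nat \<Rightarrow> real"
  assumes mono: "mono S" and nonneg: "\<And>N. 0 \<le> S N"
    and lim: "(\<lambda>k. S (k\<^sup>2) / real (k\<^sup>2)) \<longlonglongrightarrow> m"
  shows "(\<lambda>N. S N / real N) \<longlonglongrightarrow> m"
proof -
  define L where "L k = S (k\<^sup>2) / real ((Suc k)\<^sup>2)" for k
  define U where "U k = S ((Suc k)\<^sup>2) / real (k\<^sup>2)" for k
  have "(\<lambda>k. S (k\<^sup>2) / real (k\<^sup>2) * (real (k\<^sup>2) / real ((Suc k)\<^sup>2))) \<longlonglongrightarrow> m * 1"
    by (intro tendsto_mult lim) real_asymp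
  moreover have "\<forall>\<^sub>F k in sequentially. S (k\<^sup>2) / real (k\<^sup>2) * (real (k\<^sup>2) / real ((Suc k)\<^sup>2)) = L k"
    using eventually_gt_at_top[of "0::nat"] by eventually_elim (simp add: L_def)
  ultimately have limL: "L \<longlonglongrightarrow> m" by (simp add: tendsto_cong)
  have "(\<lambda>k. S ((Suc k)\<^sup>2) / real ((Suc k)\<^sup>2) * (real ((Suc k)\<^sup>2) / real (k\<^sup>2))) \<longlonglongrightarrow> m * 1"
    by (intro tendsto_mult LIMSEQ_Suc[OF lim]) real_asymp
  moreover have "\<forall>\<^sub>F k in sequentially. S ((Suc k)\<^sup>2) / real ((Suc k)\<^sup>2) * (real ((Suc k)\<^sup>2) / real (k\<^sup>2)) = U k"
    using eventually_gt_at_top[of "0::nat"] by eventually_elim (simp add: U_def del: of_nat_Suc)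
  ultimately have limU: "U \<longlonglongrightarrow> m" by (simp add: tendsto_cong)
  have bounds: "L (floor_sqrt N) \<le> S N / real N \<and> S N / real N \<le> U (floor_sqrt N)" if "N > 0" for N
  proof -
    let ?k = "floor_sqrt N"
    have N: "?k\<^sup>2 \<le> N" "N \<le> (Suc ?k)\<^sup>2" "0 < ?k"
      using that Suc_floor_sqrt_power2_gt[of N] by auto
    then have "real N \<le> real ((Suc ?k)\<^sup>2)" by (simp only: of_nat_le_iff)
    have "L ?k \<le> S N / real ((Suc ?k)\<^sup>2)"
      unfolding L_def using monoD[OF mono N(1)] by (intro divide_right_mono) auto
    also have "\<dots> \<le> S N / real N"
      using \<open>real N \<le> real ((Suc ?k)\<^sup>2)\<close> that nonneg by (intro divide_left_mono) auto
    finally have "L ?k \<le> S N / real N" .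
    moreover have "S N / real N \<le> S ((Suc ?k)\<^sup>2) / real N"
      using monoD[OF mono, of N "(Suc ?k)\<^sup>2"] N by (intro divide_right_mono) auto
    moreover have "\<dots> \<le> U ?k"
      unfolding U_def using N nonneg by (intro divide_left_mono) auto
    ultimately show ?thesis by linarith
  qed
  show ?thesis
  proof (rule tendsto_sandwich)
    show "\<forall>\<^sub>F N in sequentially. L (floor_sqrt N) \<le> S N / real N"
      "\<forall>\<^sub>F N in sequentially. S N / real N \<le> U (floor_sqrt N)"
      using eventually_gt_at_top[of "0::nat"] by (eventually_elim, use bounds in blast)+
    show "(\<lambda>N. L (floor_sqrt N)) \<longlonglongrightarrow> m" "(\<lambda>N. U (floor_sqrt N)) \<longlonglongrightarrow> m"
      using filterlim_compose[OF limL filterlim_floor_sqrt] filterlim_compose[OF limU filterlim_floor_sqrt] .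
  qed
qed

lemma AE_LIMSEQ_zero_if_summable_integral_square:
  fixes Y :: "nat \<Rightarrow> 'a \<Rightarrow> real"
  assumes [measurable]: "\<And>k. Y k \<in> borel_measurable M"
    and int: "\<And>k. integrable M (\<lambda>\<omega>. (Y k \<omega>)\<^sup>2)"
    and summable: "summable (\<lambda>k. \<integral>\<omega>. (Y k \<omega>)\<^sup>2 \<partial>M)"
  shows "AE \<omega> in M. (\<lambda>k. Y k \<omega>) \<longlonglongrightarrow> 0"
proof -
  have "(\<integral>\<^sup>+\<omega>. (\<Sum>k. ennreal ((Y k \<omega>)\<^sup>2)) \<partial>M) = (\<Sum>k. \<integral>\<^sup>+\<omega>. ennreal ((Y k \<omega>)\<^sup>2) \<partial>M)"
    by (rule nn_integral_suminf) measurable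
  also have "\<dots> = (\<Sum>k. ennreal (\<integral>\<omega>. (Y k \<omega>)\<^sup>2 \<partial>M))"
    using int by (simp add: nn_integral_eq_integral)
  also have "\<dots> = ennreal (\<Sum>k. \<integral>\<omega>. (Y k \<omega>)\<^sup>2 \<partial>M)"
    using summable by (intro suminf_ennreal2) auto
  finally have "(\<integral>\<^sup>+\<omega>. (\<Sum>k. ennreal ((Y k \<omega>)\<^sup>2)) \<partial>M) \<noteq> \<infinity>" by simp
  then have "AE \<omega> in M. (\<Sum>k. ennreal ((Y k \<omega>)\<^sup>2)) \<noteq> \<infinity>"
    by (rule nn_integral_PInf_AE[rotated]) measurable
  then show ?thesis
  proof (rule AE_mp, intro AE_I2 impI)
    fix \<omega> assume "(\<Sum>k. ennreal ((Y k \<omega>)\<^sup>2)) \<noteq> \<infinity>"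
    then have "summable (\<lambda>k. (Y k \<omega>)\<^sup>2)" by (intro summable_suminf_not_top) auto
    then have "(\<lambda>k. sqrt ((Y k \<omega>)\<^sup>2)) \<longlonglongrightarrow> sqrt 0"
      by (intro tendsto_real_sqrt summable_LIMSEQ_zero)
    then show "(\<lambda>k. Y k \<omega>) \<longlonglongrightarrow> 0" by (simp add: tendsto_rabs_zero_iff)
  qed
qed

context prob_space
begin

lemma indep_vars_measurable: "indep_vars N X I \<Longrightarrow> i \<in> I \<Longrightarrow> X i \<in> measurable M (N i)"
  by (simp add: indep_vars_def2)

lemma indep_vars_expectation_square_sum:
  fixes D :: "'i \<Rightarrow> 'a \<Rightarrow> real"
  assumes indep: "indep_vars (\<lambda>_. borel) D I" and J: "finite J" "J \<subseteq> I"
    and square: "\<And>i. i \<in> I \<Longrightarrow> integrable M (\<lambda>\<omega>. (D i \<omega>)\<^sup>2)"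
    and centered: "\<And>i. i \<in> I \<Longrightarrow> expectation (D i) = 0"
  shows "integrable M (\<lambda>\<omega>. (\<Sum>i\<in>J. D i \<omega>)\<^sup>2)"
    and "expectation (\<lambda>\<omega>. (\<Sum>i\<in>J. D i \<omega>)\<^sup>2) = (\<Sum>i\<in>J. expectation (\<lambda>\<omega>. (D i \<omega>)\<^sup>2))"
proof -
  have int: "integrable M (D i)" if "i \<in> I" for i
    using indep_vars_measurable[OF indep that] square[OF that] by (rule square_integrable_imp_integrable)
  have prod: "integrable M (\<lambda>\<omega>. D i \<omega> * D j \<omega>)
      \<and> expectation (\<lambda>\<omega>. D i \<omega> * D j \<omega>) = (if i = j then expectation (\<lambda>\<omega>. (D i \<omega>)\<^sup>2) else 0)"
    if "i \<in> J" "j \<in> J" for i j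
  proof (cases "i = j")
    case True
    then show ?thesis using square that J(2) by (auto simp: power2_eq_square)
  next
    case False
    have ind: "indep_vars (\<lambda>_. borel) D {i, j}" by (rule indep_vars_subset[OF indep]) (use that J(2) in auto)
    have ints: "\<And>k. k \<in> {i, j} \<Longrightarrow> integrable M (D k)" using int that J(2) by auto
    have "integrable M (\<lambda>\<omega>. \<Prod>k\<in>{i, j}. D k \<omega>)"
      by (rule indep_vars_integrable[OF _ ind ints]) simp
    moreover have "expectation (\<lambda>\<omega>. \<Prod>k\<in>{i, j}. D k \<omega>) = (\<Prod>k\<in>{i, j}. expectation (D k))"
      by (rule indep_vars_lebesgue_integral[OF _ ind ints]) simp
    ultimately show ?thesis using False centered that J(2) by auto
  qed
  have sq: "(\<lambda>\<omega>. (\<Sum>i\<in>J. D i \<omega>)\<^sup>2) = (\<lambda>\<omega>. \<Sum>i\<in>J. \<Sum>j\<in>J. D i \<omega> * D j \<omega>)"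
    by (simp add: power2_eq_square sum_product)
  show "integrable M (\<lambda>\<omega>. (\<Sum>i\<in>J. D i \<omega>)\<^sup>2)"
    unfolding sq using prod by (intro Bochner_Integration.integrable_sum) blast
  have "expectation (\<lambda>\<omega>. \<Sum>i\<in>J. \<Sum>j\<in>J. D i \<omega> * D j \<omega>)
      = (\<Sum>i\<in>J. \<Sum>j\<in>J. expectation (\<lambda>\<omega>. D i \<omega> * D j \<omega>))"
    using prod by (simp add: Bochner_Integration.integral_sum Bochner_Integration.integrable_sum)
  also have "\<dots> = (\<Sum>i\<in>J. \<Sum>j\<in>J. if i = j then expectation (\<lambda>\<omega>. (D i \<omega>)\<^sup>2) else 0)"
    using prod by (intro sum.cong refl) blast
  also have "\<dots> = (\<Sum>i\<in>J. expectation (\<lambda>\<omega>. (D i \<omega>)\<^sup>2))"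
    using J(1) by simp
  finally show "expectation (\<lambda>\<omega>. (\<Sum>i\<in>J. D i \<omega>)\<^sup>2) = (\<Sum>i\<in>J. expectation (\<lambda>\<omega>. (D i \<omega>)\<^sup>2))"
    unfolding sq .
qed

lemma centered_square_integrable:
  fixes X :: "'a \<Rightarrow> real"
  assumes "X \<in> borel_measurable M" "integrable M (\<lambda>\<omega>. (X \<omega>)\<^sup>2)"
  shows "integrable M (\<lambda>\<omega>. (X \<omega> - expectation X)\<^sup>2)"
    and "expectation (\<lambda>\<omega>. (X \<omega> - expectation X)\<^sup>2) \<le> expectation (\<lambda>\<omega>. (X \<omega>)\<^sup>2)"
proof -
  have int: "integrable M X" using assms by (rule square_integrable_imp_integrable)
  have "(\<lambda>\<omega>. (X \<omega> - expectation X)\<^sup>2) = (\<lambda>\<omega>. (X \<omega>)\<^sup>2 - 2 * expectation X * X \<omega> + (expectation X)\<^sup>2)"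
    by (simp add: power2_diff algebra_simps)
  then show "integrable M (\<lambda>\<omega>. (X \<omega> - expectation X)\<^sup>2)"
    using int assms(2) by simp
  show "expectation (\<lambda>\<omega>. (X \<omega> - expectation X)\<^sup>2) \<le> expectation (\<lambda>\<omega>. (X \<omega>)\<^sup>2)"
    using variance_eq[OF int assms(2)] by simp
qed

lemma indep_vars_expectation_square_average:
  fixes D :: "nat \<Rightarrow> 'a \<Rightarrow> real"
  assumes indep: "indep_vars (\<lambda>_. borel) D {1..}"
    and D: "\<And>i. 1 \<le> i \<Longrightarrow> integrable M (\<lambda>\<omega>. (D i \<omega>)\<^sup>2) \<and> expectation (D i) = 0
      \<and> expectation (\<lambda>\<omega>. (D i \<omega>)\<^sup>2) \<le> V"
  shows "integrable M (\<lambda>\<omega>. ((\<Sum>i=1..N. D i \<omega>) / real N)\<^sup>2)"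
    and "expectation (\<lambda>\<omega>. ((\<Sum>i=1..N. D i \<omega>) / real N)\<^sup>2) \<le> V / real N"
proof -
  have sum: "integrable M (\<lambda>\<omega>. (\<Sum>i=1..N. D i \<omega>)\<^sup>2)"
    "expectation (\<lambda>\<omega>. (\<Sum>i=1..N. D i \<omega>)\<^sup>2) = (\<Sum>i=1..N. expectation (\<lambda>\<omega>. (D i \<omega>)\<^sup>2))"
    using D by (auto intro!: indep_vars_expectation_square_sum[OF indep])
  then show "integrable M (\<lambda>\<omega>. ((\<Sum>i=1..N. D i \<omega>) / real N)\<^sup>2)"
    by (simp add: power_divide)
  have "expectation (\<lambda>\<omega>. ((\<Sum>i=1..N. D i \<omega>) / real N)\<^sup>2)
      = expectation (\<lambda>\<omega>. (\<Sum>i=1..N. D i \<omega>)\<^sup>2) / real N ^ 2"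
    by (simp add: power_divide)
  also have "\<dots> \<le> real N * V / real N ^ 2"
    unfolding sum(2) using D sum_bounded_above[of "{1..N}" _ V] by (intro divide_right_mono) auto
  also have "\<dots> = V / real N"
    by (cases "N = 0") (simp_all add: power2_eq_square)
  finally show "expectation (\<lambda>\<omega>. ((\<Sum>i=1..N. D i \<omega>) / real N)\<^sup>2) \<le> V / real N" .
qed

lemma AE_square_averages_tendsto:
  fixes W :: "nat \<Rightarrow> 'a \<Rightarrow> real"
  assumes indep: "indep_vars (\<lambda>_. borel) W {1..}"
    and square: "\<And>i. 1 \<le> i \<Longrightarrow> integrable M (\<lambda>\<omega>. (W i \<omega>)\<^sup>2)"
    and mean: "\<And>i. 1 \<le> i \<Longrightarrow> expectation (W i) = m"
    and bound: "\<And>i. 1 \<le> i \<Longrightarrow> expectation (\<lambda>\<omega>. (W i \<omega>)\<^sup>2) \<le> V"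
  shows "AE \<omega> in M. (\<lambda>k. (\<Sum>i=1..k\<^sup>2. W i \<omega>) / real (k\<^sup>2)) \<longlonglongrightarrow> m"
proof -
  define D where "D i \<omega> = W i \<omega> - m" for i \<omega>
  define Y where "Y k \<omega> = (\<Sum>i=1..k\<^sup>2. D i \<omega>) / real (k\<^sup>2)" for k \<omega>
  have measW: "W i \<in> borel_measurable M" if "1 \<le> i" for i
    using indep_vars_measurable[OF indep] that by simp
  have D: "integrable M (\<lambda>\<omega>. (D i \<omega>)\<^sup>2) \<and> expectation (D i) = 0 \<and> expectation (\<lambda>\<omega>. (D i \<omega>)\<^sup>2) \<le> V"
    if i: "1 \<le> i" for i
    using centered_square_integrable[OF measW[OF i] square[OF i]] bound[OF i] mean[OF i]
      square_integrable_imp_integrable[OF measW[OF i] square[OF i]]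
    by (auto simp: D_def[abs_def] prob_space Bochner_Integration.integral_diff)
  have indD: "indep_vars (\<lambda>_. borel) D {1..}"
    unfolding D_def[abs_def] by (rule indep_vars_compose2[OF indep, where Y = "\<lambda>i x. x - m"]) measurable
  note Y = indep_vars_expectation_square_average[OF indD D, of "k\<^sup>2" for k, folded Y_def]
  have "summable (\<lambda>k. expectation (\<lambda>\<omega>. (Y k \<omega>)\<^sup>2))"
  proof (rule summable_comparison_test'[where N = 0])
    show "summable (\<lambda>k. V * inverse (real k ^ 2))"
      by (rule summable_mult[OF inverse_power_summable]) simp
    show "norm (expectation (\<lambda>\<omega>. (Y k \<omega>)\<^sup>2)) \<le> V * inverse (real k ^ 2)" for k
      using Y(2)[of k] integral_nonneg_AE[of "\<lambda>\<omega>. (Y k \<omega>)\<^sup>2" M] by (simp add: field_simps)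
  qed
  moreover have "Y k \<in> borel_measurable M" for k
    unfolding Y_def D_def using measW by (auto intro!: borel_measurable_divide borel_measurable_sum)
  ultimately have "AE \<omega> in M. (\<lambda>k. Y k \<omega>) \<longlonglongrightarrow> 0"
    using Y(1) by (intro AE_LIMSEQ_zero_if_summable_integral_square) auto
  then show ?thesis
  proof (rule AE_mp, intro AE_I2 impI)
    fix \<omega> assume "(\<lambda>k. Y k \<omega>) \<longlonglongrightarrow> 0"
    moreover have "\<forall>\<^sub>F k in sequentially. Y k \<omega> + m = (\<Sum>i=1..k\<^sup>2. W i \<omega>) / real (k\<^sup>2)"
      using eventually_gt_at_top[of "0::nat"]
      by eventually_elim (simp add: Y_def D_def sum_subtractf field_simps)
    ultimately show "(\<lambda>k. (\<Sum>i=1..k\<^sup>2. W i \<omega>) / real (k\<^sup>2)) \<longlonglongrightarrow> m"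
      using Lim_transform_eventually[OF tendsto_add[OF _ tendsto_const[of m]]] by fastforce
  qed
qed

lemma strong_law_bounded_second_moments:
  fixes W :: "nat \<Rightarrow> 'a \<Rightarrow> real"
  assumes indep: "indep_vars (\<lambda>_. borel) W {1..}"
    and square: "\<And>i. 1 \<le> i \<Longrightarrow> integrable M (\<lambda>\<omega>. (W i \<omega>)\<^sup>2)"
    and mean: "\<And>i. 1 \<le> i \<Longrightarrow> expectation (W i) = m"
    and bound: "\<And>i. 1 \<le> i \<Longrightarrow> expectation (\<lambda>\<omega>. (W i \<omega>)\<^sup>2) \<le> V"
    and nonneg: "\<And>i \<omega>. 1 \<le> i \<Longrightarrow> \<omega> \<in> space M \<Longrightarrow> 0 \<le> W i \<omega>"
  shows "AE \<omega> in M. (\<lambda>N. (\<Sum>i=1..N. W i \<omega>) / real N) \<longlonglongrightarrow> m"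
proof -
  have "AE \<omega> in M. (\<lambda>k. (\<Sum>i=1..k\<^sup>2. W i \<omega>) / real (k\<^sup>2)) \<longlonglongrightarrow> m"
    by (rule AE_square_averages_tendsto[OF indep]) (use square mean bound in auto)
  then show ?thesis
  proof (rule AE_mp, intro AE_I2 impI)
    fix \<omega> assume \<omega>: "\<omega> \<in> space M"
      and lim: "(\<lambda>k. (\<Sum>i=1..k\<^sup>2. W i \<omega>) / real (k\<^sup>2)) \<longlonglongrightarrow> m"
    have "mono (\<lambda>N. \<Sum>i=1..N. W i \<omega>)"
      using \<omega> nonneg by (intro monoI sum_mono2) auto
    then show "(\<lambda>N. (\<Sum>i=1..N. W i \<omega>) / real N) \<longlonglongrightarrow> m"
      using \<omega> nonneg lim by (intro mono_average_tendsto_from_squares) (auto intro!: sum_nonneg)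
  qed
qed

end

section \<open>Renewal-reward limits\<close>

lemma psum_Suc: "psum \<tau> (Suc i) = psum \<tau> i + \<tau> (Suc i)"
  by (simp add: psum_def)

lemma mono_psum: "mono (psum \<tau>)"
  unfolding psum_def by (intro monoI sum_mono2) auto

lemma psum_ge:
  assumes "\<And>i. 1 \<le> i \<Longrightarrow> 1 \<le> \<tau> i"
  shows "i \<le> psum \<tau> i"
proof (induction i)
  case (Suc i)
  then show ?case using assms[of "Suc i"] by (simp add: psum_Suc)
qed (simp add: psum_def)

lemma state_proc_eq:
  assumes "1 \<le> i" "psum \<tau> (i - 1) < t" "t \<le> psum \<tau> i"
  shows "state_proc \<theta> \<tau> t = \<theta> i"
proof -
  have "i' = i" if "1 \<le> i'" "psum \<tau> (i' - 1) < t" "t \<le> psum \<tau> i'" for i'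
  proof (rule ccontr)
    assume "i' \<noteq> i"
    then have "i' \<le> i - 1 \<or> i \<le> i' - 1" using assms(1) that(1) by linarith
    then show False
    proof
      assume "i' \<le> i - 1"
      then have "psum \<tau> i' \<le> psum \<tau> (i - 1)" by (rule monoD[OF mono_psum])
      then show False using assms(2) that(3) by linarith
    next
      assume "i \<le> i' - 1"
      then have "psum \<tau> i \<le> psum \<tau> (i' - 1)" by (rule monoD[OF mono_psum])
      then show False using assms(3) that(2) by linarith
    qed
  qed
  then have "(THE i. 1 \<le> i \<and> psum \<tau> (i - 1) < t \<and> t \<le> psum \<tau> i) = i"
    using assms by (intro the_equality) blast+
  then show ?thesis by (simp add: state_proc_def)
qed

lemma card_state_proc_psum:
  "card {t \<in> {1..psum \<tau> N}. state_proc \<theta> \<tau> t \<in> A} = (\<Sum>i=1..N. if \<theta> i \<in> A then \<tau> i else 0)"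
proof (induction N)
  case (Suc N)
  let ?P = "\<lambda>t. state_proc \<theta> \<tau> t \<in> A"
  have "psum \<tau> N \<le> psum \<tau> (Suc N)" by (simp add: psum_Suc)
  then have split: "{t \<in> {1..psum \<tau> (Suc N)}. ?P t}
      = {t \<in> {1..psum \<tau> N}. ?P t} \<union> {t \<in> {psum \<tau> N<..psum \<tau> (Suc N)}. ?P t}"
    by auto
  have "state_proc \<theta> \<tau> t = \<theta> (Suc N)" if "t \<in> {psum \<tau> N<..psum \<tau> (Suc N)}" for t
    using state_proc_eq[of "Suc N" \<tau> t \<theta>] that by simp
  then have "{t \<in> {psum \<tau> N<..psum \<tau> (Suc N)}. ?P t}
      = (if \<theta> (Suc N) \<in> A then {psum \<tau> N<..psum \<tau> (Suc N)} else {})"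
    by auto
  then have "card {t \<in> {psum \<tau> N<..psum \<tau> (Suc N)}. ?P t} = (if \<theta> (Suc N) \<in> A then \<tau> (Suc N) else 0)"
    by (simp add: psum_Suc)
  then show ?case
    unfolding split using Suc.IH by (subst card_Un_disjoint) auto
qed (simp add: psum_def)

definition completed_cycles :: "(nat \<Rightarrow> nat) \<Rightarrow> nat \<Rightarrow> nat" where
  "completed_cycles \<tau> T = (LEAST j. T < psum \<tau> (Suc j))"

lemma completed_cycles:
  assumes "\<And>i. 1 \<le> i \<Longrightarrow> 1 \<le> \<tau> i"
  shows "psum \<tau> (completed_cycles \<tau> T) \<le> T" "T < psum \<tau> (Suc (completed_cycles \<tau> T))"
proof -
  have ex: "\<exists>j. T < psum \<tau> (Suc j)"
    using psum_ge[of \<tau>, OF assms, of "Suc T"] by (intro exI[of _ T]) simp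
  show "T < psum \<tau> (Suc (completed_cycles \<tau> T))"
    unfolding completed_cycles_def by (rule LeastI_ex[OF ex])
  show "psum \<tau> (completed_cycles \<tau> T) \<le> T"
  proof (cases "completed_cycles \<tau> T")
    case (Suc j)
    then have "\<not> T < psum \<tau> (Suc j)"
      using not_less_Least[of j "\<lambda>j. T < psum \<tau> (Suc j)"] by (simp add: completed_cycles_def)
    then show ?thesis using Suc by simp
  qed (simp add: psum_def)
qed

lemma filterlim_completed_cycles:
  assumes "\<And>i. 1 \<le> i \<Longrightarrow> 1 \<le> \<tau> i"
  shows "filterlim (completed_cycles \<tau>) at_top sequentially"
  unfolding filterlim_at_top
proof
  fix K
  show "\<forall>\<^sub>F T in sequentially. K \<le> completed_cycles \<tau> T"
    using eventually_ge_at_top[of "psum \<tau> K"]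
  proof eventually_elim
    case (elim T)
    then have "psum \<tau> K < psum \<tau> (Suc (completed_cycles \<tau> T))"
      using completed_cycles(2)[of \<tau>, OF assms, of T] by simp
    then show ?case using monoD[OF mono_psum[of \<tau>], of "Suc (completed_cycles \<tau> T)" K] by fastforce
  qed
qed

lemma LIMSEQ_ratio_shift:
  fixes R S :: "nat \<Rightarrow> real"
  assumes R: "(\<lambda>N. R N / real N) \<longlonglongrightarrow> a" and S: "(\<lambda>N. S N / real N) \<longlonglongrightarrow> b" and "b \<noteq> 0"
  shows "(\<lambda>N. R (N + i) / S (N + j)) \<longlonglongrightarrow> a / b"
proof -
  have "(\<lambda>N. R (N + i) / real (N + i) * (real (N + i) / real (N + j)) / (S (N + j) / real (N + j)))
      \<longlonglongrightarrow> a * 1 / b"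
    using assms LIMSEQ_ignore_initial_segment[OF R, of i] LIMSEQ_ignore_initial_segment[OF S, of j]
    by (intro tendsto_intros) (simp_all, real_asymp)
  moreover have eq: "R (N + i) / real (N + i) * (real (N + i) / real (N + j)) / (S (N + j) / real (N + j))
      = R (N + i) / S (N + j)" if "N > 0" for N
  proof -
    have "real (N + i) \<noteq> 0" "real (N + j) \<noteq> 0" using that by auto
    then show ?thesis by simp
  qed
  have "\<forall>\<^sub>F N in sequentially.
      R (N + i) / real (N + i) * (real (N + i) / real (N + j)) / (S (N + j) / real (N + j)) = R (N + i) / S (N + j)"
    using eventually_gt_at_top[of "0::nat"] by (rule eventually_mono) (rule eq)
  ultimately have "(\<lambda>N. R (N + i) / S (N + j)) \<longlonglongrightarrow> a * 1 / b" by (rule Lim_transform_eventually)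
  then show ?thesis by simp
qed

definition cycle_reward :: "(nat \<Rightarrow> 'a) \<Rightarrow> (nat \<Rightarrow> nat) \<Rightarrow> 'a set \<Rightarrow> nat \<Rightarrow> real" where
  "cycle_reward \<theta> \<tau> A N = (\<Sum>i=1..N. real (\<tau> i) * indicator A (\<theta> i))"

lemma occupation_between_cycle_rewards:
  assumes pos: "\<And>i. 1 \<le> i \<Longrightarrow> 1 \<le> \<tau> i" and N: "N = completed_cycles \<tau> T" "1 \<le> N"
  shows "cycle_reward \<theta> \<tau> A N / real (psum \<tau> (N + 1)) \<le> occupation \<theta> \<tau> A T"
    and "occupation \<theta> \<tau> A T \<le> cycle_reward \<theta> \<tau> A (N + 1) / real (psum \<tau> N)"
proof -
  define C where "C T = real (card {t \<in> {1..T}. state_proc \<theta> \<tau> t \<in> A})" for T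
  have C_psum: "C (psum \<tau> N) = cycle_reward \<theta> \<tau> A N" for N
    unfolding C_def cycle_reward_def card_state_proc_psum of_nat_sum
    by (intro sum.cong) (auto simp: indicator_def)
  have C_mono: "C T \<le> C T'" if "T \<le> T'" for T T'
    unfolding C_def using that by (intro of_nat_mono card_mono) auto
  have T: "psum \<tau> N \<le> T" "T < psum \<tau> (N + 1)" using completed_cycles[of \<tau>, OF pos] N by auto
  have "0 < psum \<tau> N" using psum_ge[of \<tau>, OF pos, of N] N by linarith
  have occ: "occupation \<theta> \<tau> A T = C T / real T" by (simp add: occupation_def C_def)
  have "cycle_reward \<theta> \<tau> A N / real (psum \<tau> (N + 1)) \<le> C T / real (psum \<tau> (N + 1))"
    using C_mono[OF T(1)] by (simp add: C_psum divide_right_mono)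
  also have "\<dots> \<le> C T / real T"
    using T \<open>0 < psum \<tau> N\<close> by (intro divide_left_mono) (auto simp: C_def)
  finally show "cycle_reward \<theta> \<tau> A N / real (psum \<tau> (N + 1)) \<le> occupation \<theta> \<tau> A T"
    by (simp add: occ)
  have "C T / real T \<le> cycle_reward \<theta> \<tau> A (N + 1) / real T"
    using C_mono[of T "psum \<tau> (N + 1)"] T by (simp add: C_psum divide_right_mono)
  also have "\<dots> \<le> cycle_reward \<theta> \<tau> A (N + 1) / real (psum \<tau> N)"
  proof (rule divide_left_mono)
    show "0 \<le> cycle_reward \<theta> \<tau> A (N + 1)"
      unfolding cycle_reward_def by (intro sum_nonneg) simp
  qed (use T \<open>0 < psum \<tau> N\<close> in auto)
  finally show "occupation \<theta> \<tau> A T \<le> cycle_reward \<theta> \<tau> A (N + 1) / real (psum \<tau> N)"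
    by (simp add: occ)
qed

lemma occupation_tendsto:
  fixes \<theta> :: "nat \<Rightarrow> 'a" and \<tau> :: "nat \<Rightarrow> nat"
  assumes pos: "\<And>i. 1 \<le> i \<Longrightarrow> 1 \<le> \<tau> i"
    and S: "(\<lambda>N. (\<Sum>i=1..N. real (\<tau> i)) / real N) \<longlonglongrightarrow> b" and "b > 0"
    and R: "(\<lambda>N. (\<Sum>i=1..N. real (\<tau> i) * indicator A (\<theta> i)) / real N) \<longlonglongrightarrow> a"
  shows "(\<lambda>T. occupation \<theta> \<tau> A T) \<longlonglongrightarrow> a / b"
proof (rule tendsto_sandwich)
  let ?N = "completed_cycles \<tau>"
  have "real (psum \<tau> N) = (\<Sum>i=1..N. real (\<tau> i))" for N
    by (simp add: psum_def)
  then have "(\<lambda>N. cycle_reward \<theta> \<tau> A (N + 0) / real (psum \<tau> (N + 1))) \<longlonglongrightarrow> a / b"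
    "(\<lambda>N. cycle_reward \<theta> \<tau> A (N + 1) / real (psum \<tau> (N + 0))) \<longlonglongrightarrow> a / b"
    using R S \<open>b > 0\<close> by (intro LIMSEQ_ratio_shift; simp add: cycle_reward_def)+
  then show "(\<lambda>T. cycle_reward \<theta> \<tau> A (?N T) / real (psum \<tau> (?N T + 1))) \<longlonglongrightarrow> a / b"
    "(\<lambda>T. cycle_reward \<theta> \<tau> A (?N T + 1) / real (psum \<tau> (?N T))) \<longlonglongrightarrow> a / b"
    using filterlim_compose[OF _ filterlim_completed_cycles[of \<tau>, OF pos]] by simp_all
  have ev: "\<forall>\<^sub>F T in sequentially. 1 \<le> ?N T"
    using filterlim_completed_cycles[of \<tau>, OF pos] by (simp add: filterlim_at_top)
  show "\<forall>\<^sub>F T in sequentially. cycle_reward \<theta> \<tau> A (?N T) / real (psum \<tau> (?N T + 1)) \<le> occupation \<theta> \<tau> A T"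
    using ev by eventually_elim (rule occupation_between_cycle_rewards(1)[OF pos refl])
  show "\<forall>\<^sub>F T in sequentially. occupation \<theta> \<tau> A T \<le> cycle_reward \<theta> \<tau> A (?N T + 1) / real (psum \<tau> (?N T))"
    using ev by eventually_elim (rule occupation_between_cycle_rewards(2)[OF pos refl])
qed

lemma nn_integral_indicator_joint_law:
  fixes X :: "'a \<Rightarrow> 'b" and K :: "'a \<Rightarrow> nat" and q :: "nat \<Rightarrow> 'b \<Rightarrow> ennreal"
  assumes [measurable]: "X \<in> measurable M N" "K \<in> measurable M (count_space UNIV)" "B \<in> sets N"
      "\<And>k. q k \<in> borel_measurable N"
    and law: "\<And>k. emeasure M {\<omega> \<in> space M. X \<omega> \<in> B \<and> K \<omega> = k} = (\<integral>\<^sup>+x. q k x * indicator B x \<partial>N)"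
  shows "(\<integral>\<^sup>+\<omega>. f (K \<omega>) * indicator B (X \<omega>) \<partial>M) = (\<integral>\<^sup>+x. (\<Sum>k. f k * q k x) * indicator B x \<partial>N)"
proof -
  define S where "S k = {\<omega> \<in> space M. X \<omega> \<in> B \<and> K \<omega> = k}" for k
  have [measurable]: "S k \<in> sets M" for k unfolding S_def by measurable
  have "(\<integral>\<^sup>+\<omega>. f (K \<omega>) * indicator B (X \<omega>) \<partial>M) = (\<integral>\<^sup>+\<omega>. (\<Sum>k. f k * indicator (S k) \<omega>) \<partial>M)"
  proof (rule nn_integral_cong)
    fix \<omega> assume "\<omega> \<in> space M"
    then have "(\<Sum>k. f k * indicator (S k) \<omega>) = (\<Sum>k\<in>{K \<omega>}. f k * indicator (S k) \<omega>)"
      by (intro suminf_finite) (auto simp: S_def)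
    also have "\<dots> = f (K \<omega>) * indicator B (X \<omega>)"
      using \<open>\<omega> \<in> space M\<close> by (simp add: S_def indicator_def)
    finally show "f (K \<omega>) * indicator B (X \<omega>) = (\<Sum>k. f k * indicator (S k) \<omega>)" ..
  qed
  also have "\<dots> = (\<Sum>k. f k * emeasure M (S k))"
    by (simp add: nn_integral_suminf nn_integral_cmult_indicator)
  also have "\<dots> = (\<Sum>k. \<integral>\<^sup>+x. f k * q k x * indicator B x \<partial>N)"
    by (simp add: S_def law nn_integral_cmult mult.assoc)
  also have "\<dots> = (\<integral>\<^sup>+x. (\<Sum>k. f k * q k x * indicator B x) \<partial>N)"
    by (rule nn_integral_suminf[symmetric]) measurable
  also have "\<dots> = (\<integral>\<^sup>+x. (\<Sum>k. f k * q k x) * indicator B x \<partial>N)"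
    by (simp add: ennreal_suminf_multc)
  finally show ?thesis .
qed

lemma (in prob_space) AE_average_tendsto_dominated:
  fixes \<theta> :: "nat \<Rightarrow> 'a \<Rightarrow> 'b" and \<tau> :: "nat \<Rightarrow> 'a \<Rightarrow> nat" and f :: "'b \<Rightarrow> nat \<Rightarrow> real"
  assumes indep: "indep_vars (\<lambda>i. N \<Otimes>\<^sub>M count_space UNIV) (\<lambda>i \<omega>. (\<theta> i \<omega>, \<tau> i \<omega>)) {1..}"
    and f: "(\<lambda>(x, k). f x k) \<in> borel_measurable (N \<Otimes>\<^sub>M count_space UNIV)"
      "\<And>x k. 0 \<le> f x k" "\<And>x k. f x k \<le> real k"
    and square: "\<And>i. 1 \<le> i \<Longrightarrow> integrable M (\<lambda>\<omega>. (real (\<tau> i \<omega>))\<^sup>2)"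
    and bound: "\<And>i. 1 \<le> i \<Longrightarrow> expectation (\<lambda>\<omega>. (real (\<tau> i \<omega>))\<^sup>2) \<le> V"
    and mean: "\<And>i. 1 \<le> i \<Longrightarrow> expectation (\<lambda>\<omega>. f (\<theta> i \<omega>) (\<tau> i \<omega>)) = a"
  shows "AE \<omega> in M. (\<lambda>N. (\<Sum>i=1..N. f (\<theta> i \<omega>) (\<tau> i \<omega>)) / real N) \<longlonglongrightarrow> a"
proof (rule strong_law_bounded_second_moments)
  show "indep_vars (\<lambda>_. borel) (\<lambda>i \<omega>. f (\<theta> i \<omega>) (\<tau> i \<omega>)) {1..}"
    using indep_vars_compose2[OF indep f(1)] by simp
  fix i :: nat assume i: "1 \<le> i"
  have le: "(f (\<theta> i \<omega>) (\<tau> i \<omega>))\<^sup>2 \<le> (real (\<tau> i \<omega>))\<^sup>2" for \<omega>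
    using f(2,3) by (intro power_mono)
  have "(\<lambda>\<omega>. (f (\<theta> i \<omega>) (\<tau> i \<omega>))\<^sup>2) \<in> borel_measurable M"
    using measurable_compose[OF indep_vars_measurable[OF indep] f(1)] i by simp
  then show int: "integrable M (\<lambda>\<omega>. (f (\<theta> i \<omega>) (\<tau> i \<omega>))\<^sup>2)"
    using le f(2) by (intro Bochner_Integration.integrable_bound[OF square[OF i]]) auto
  show "expectation (\<lambda>\<omega>. (f (\<theta> i \<omega>) (\<tau> i \<omega>))\<^sup>2) \<le> V"
    using integral_mono[OF int square[OF i] le] bound[OF i] by linarith
  show "expectation (\<lambda>\<omega>. f (\<theta> i \<omega>) (\<tau> i \<omega>)) = a" by (rule mean[OF i])
  show "0 \<le> f (\<theta> i \<omega>) (\<tau> i \<omega>)" for \<omega> by (rule f(2))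
qed

lemma (in prob_space) AE_occupation_tendsto:
  fixes \<theta> :: "nat \<Rightarrow> 'a \<Rightarrow> 'b" and \<tau> :: "nat \<Rightarrow> 'a \<Rightarrow> nat"
  assumes indep: "indep_vars (\<lambda>i. N \<Otimes>\<^sub>M count_space UNIV) (\<lambda>i \<omega>. (\<theta> i \<omega>, \<tau> i \<omega>)) {1..}"
    and A: "A \<in> sets N"
    and pos: "\<And>i. 1 \<le> i \<Longrightarrow> AE \<omega> in M. 1 \<le> \<tau> i \<omega>"
    and square: "\<And>i. 1 \<le> i \<Longrightarrow> integrable M (\<lambda>\<omega>. (real (\<tau> i \<omega>))\<^sup>2)"
    and bound: "\<And>i. 1 \<le> i \<Longrightarrow> expectation (\<lambda>\<omega>. (real (\<tau> i \<omega>))\<^sup>2) \<le> V"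
    and mean_A: "\<And>i. 1 \<le> i \<Longrightarrow> expectation (\<lambda>\<omega>. real (\<tau> i \<omega>) * indicator A (\<theta> i \<omega>)) = a"
    and mean: "\<And>i. 1 \<le> i \<Longrightarrow> expectation (\<lambda>\<omega>. real (\<tau> i \<omega>)) = b"
  shows "AE \<omega> in M. (\<lambda>T. occupation (\<lambda>i. \<theta> i \<omega>) (\<lambda>i. \<tau> i \<omega>) A T) \<longlonglongrightarrow> a / b"
proof -
  have reward: "AE \<omega> in M. (\<lambda>N. (\<Sum>i=1..N. real (\<tau> i \<omega>) * indicator A (\<theta> i \<omega>)) / real N) \<longlonglongrightarrow> a"
  proof (rule AE_average_tendsto_dominated[OF indep, where f = "\<lambda>x k. real k * indicator A x"])
    show "(\<lambda>(x, k). real k * indicator A x) \<in> borel_measurable (N \<Otimes>\<^sub>M count_space UNIV)"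
      using A by measurable
  qed (use square bound mean_A in \<open>auto simp: indicator_def\<close>)
  have length: "AE \<omega> in M. (\<lambda>N. (\<Sum>i=1..N. real (\<tau> i \<omega>)) / real N) \<longlonglongrightarrow> b"
    by (rule AE_average_tendsto_dominated[OF indep, where f = "\<lambda>x k. real k"])
      (use square bound mean in auto)
  have "(\<lambda>\<omega>. real (\<tau> 1 \<omega>)) \<in> borel_measurable M"
    using indep_vars_measurable[OF indep, of 1] by simp
  then have "integrable M (\<lambda>\<omega>. real (\<tau> 1 \<omega>))"
    using square[OF order_refl] by (rule square_integrable_imp_integrable)
  moreover have "AE \<omega> in M. 1 \<le> real (\<tau> 1 \<omega>)"
    using pos[OF order_refl] by eventually_elim simp
  ultimately have "1 \<le> b"
    using integral_ge_const mean[OF order_refl] by fastforce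
  have "AE \<omega> in M. \<forall>i. 1 \<le> i \<longrightarrow> 1 \<le> \<tau> i \<omega>"
    using pos by (subst AE_all_countable) auto
  with reward length show ?thesis
  proof eventually_elim
    case (elim \<omega>)
    then show ?case using \<open>1 \<le> b\<close> by (intro occupation_tendsto) auto
  qed
qed

section \<open>The occupation measure of the state process\<close>

locale er_return_cycles = M: prob_space M + mu: prob_space \<mu>
  for M :: "'m measure" and \<mu> :: "'a measure" +
  fixes n :: nat and g :: "'a \<Rightarrow> real"
    and \<theta> :: "nat \<Rightarrow> 'm \<Rightarrow> 'a" and \<tau> :: "nat \<Rightarrow> 'm \<Rightarrow> nat"
  assumes n: "n \<ge> 1"
    and g_meas [measurable]: "g \<in> borel_measurable \<mu>"
    and g_range: "\<And>x. x \<in> space \<mu> \<Longrightarrow> 0 \<le> g x \<and> g x \<le> 1"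
    and indep: "M.indep_vars (\<lambda>i. \<mu> \<Otimes>\<^sub>M count_space UNIV) (\<lambda>i \<omega>. (\<theta> i \<omega>, \<tau> i \<omega>)) {1..}"
    and joint_law: "\<And>i A k. i \<ge> 1 \<Longrightarrow> A \<in> sets \<mu> \<Longrightarrow>
      measure M {\<omega> \<in> space M. \<theta> i \<omega> \<in> A \<and> \<tau> i \<omega> = k} = (LINT x:A|\<mu>. tau_dist n (g x) k)"
begin

lemma measurable_cycle:
  assumes "1 \<le> i"
  shows "\<theta> i \<in> measurable M \<mu>" "\<tau> i \<in> measurable M (count_space UNIV)"
  using M.indep_vars_measurable[OF indep, of i] assms by (simp_all add: measurable_pair_iff comp_def)

lemma integrable_tau_dist: "integrable \<mu> (\<lambda>x. tau_dist n (g x) k)"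
proof (rule mu.integrable_const_bound)
  show "AE x in \<mu>. norm (tau_dist n (g x) k) \<le> (\<Sum>E\<in>Pow (all_edges n). ret_prob n E k)"
    using g_range tau_dist_nonneg tau_dist_le_sum_ret_prob by (intro AE_I2) simp
qed (simp add: tau_dist_def er_prob_def)

lemma integrable_exp_tau: "integrable \<mu> (\<lambda>x. exp_tau n (g x))"
proof (rule mu.integrable_const_bound)
  show "AE x in \<mu>. norm (exp_tau n (g x)) \<le> (\<Sum>E\<in>Pow (all_edges n). exp_ret n E)"
    using g_range exp_tau_nonneg[OF n] exp_tau_le_sum_exp_ret[OF n] by (intro AE_I2) simp
qed (simp add: exp_tau_def er_prob_def)

lemma nn_integral_cycle:
  assumes i: "1 \<le> i" and B: "B \<in> sets \<mu>"
  shows "(\<integral>\<^sup>+\<omega>. f (\<tau> i \<omega>) * indicator B (\<theta> i \<omega>) \<partial>M)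
    = (\<integral>\<^sup>+x\<in>B. (\<Sum>k. f k * ennreal (tau_dist n (g x) k)) \<partial>\<mu>)"
proof (rule nn_integral_indicator_joint_law[OF measurable_cycle[OF i] B])
  show "(\<lambda>x. ennreal (tau_dist n (g x) k)) \<in> borel_measurable \<mu>" for k
    unfolding tau_dist_def er_prob_def by measurable
  show "emeasure M {\<omega> \<in> space M. \<theta> i \<omega> \<in> B \<and> \<tau> i \<omega> = k} = (\<integral>\<^sup>+x\<in>B. tau_dist n (g x) k \<partial>\<mu>)" for k
    using joint_law[OF i B] B integrable_tau_dist g_range tau_dist_nonneg
    by (simp add: M.emeasure_eq_measure nn_set_integral_eq_set_integral)
qed

lemma expectation_cycle_reward:
  assumes i: "1 \<le> i" and B: "B \<in> sets \<mu>"
  shows "integrable M (\<lambda>\<omega>. real (\<tau> i \<omega>) * indicator B (\<theta> i \<omega>))"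
    and "M.expectation (\<lambda>\<omega>. real (\<tau> i \<omega>) * indicator B (\<theta> i \<omega>)) = (LINT x:B|\<mu>. exp_tau n (g x))"
proof -
  note [measurable] = measurable_cycle[OF i] B
  have series: "(\<Sum>k. ennreal (real k) * ennreal (tau_dist n (g x) k)) = ennreal (exp_tau n (g x))"
    if "x \<in> space \<mu>" for x
  proof -
    have nonneg: "0 \<le> tau_dist n (g x) k" for k
      using g_range[OF that] by (intro tau_dist_nonneg) auto
    have "(\<Sum>k. ennreal (real k) * ennreal (tau_dist n (g x) k)) = (\<Sum>k. ennreal (real k * tau_dist n (g x) k))"
      using nonneg by (simp add: ennreal_mult)
    also have "\<dots> = ennreal (\<Sum>k. real k * tau_dist n (g x) k)"
      using nonneg sums_summable[OF sums_exp_tau[OF n]] by (intro suminf_ennreal2) auto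
    also have "(\<Sum>k. real k * tau_dist n (g x) k) = exp_tau n (g x)"
      using sums_exp_tau[OF n] by (rule sums_unique[symmetric])
    finally show ?thesis .
  qed
  have "(\<integral>\<^sup>+\<omega>. ennreal (real (\<tau> i \<omega>) * indicator B (\<theta> i \<omega>)) \<partial>M)
      = (\<integral>\<^sup>+\<omega>. ennreal (real (\<tau> i \<omega>)) * indicator B (\<theta> i \<omega>) \<partial>M)"
    by (intro nn_integral_cong) (simp split: split_indicator)
  also have "\<dots> = (\<integral>\<^sup>+x\<in>B. (\<Sum>k. ennreal (real k) * ennreal (tau_dist n (g x) k)) \<partial>\<mu>)"
    by (rule nn_integral_cycle[OF i B])
  also have "\<dots> = (\<integral>\<^sup>+x\<in>B. exp_tau n (g x) \<partial>\<mu>)"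
    by (rule nn_integral_cong) (simp add: series)
  also have "\<dots> = ennreal (LINT x:B|\<mu>. exp_tau n (g x))"
    using integrable_exp_tau B g_range exp_tau_nonneg[OF n]
    by (intro nn_set_integral_eq_set_integral) (auto simp:)
  finally have nn: "(\<integral>\<^sup>+\<omega>. ennreal (real (\<tau> i \<omega>) * indicator B (\<theta> i \<omega>)) \<partial>M)
      = ennreal (LINT x:B|\<mu>. exp_tau n (g x))" .
  moreover have "0 \<le> (LINT x:B|\<mu>. exp_tau n (g x))"
    using g_range exp_tau_nonneg[OF n] unfolding set_lebesgue_integral_def
    by (intro integral_nonneg_AE AE_I2) simp
  ultimately show "integrable M (\<lambda>\<omega>. real (\<tau> i \<omega>) * indicator B (\<theta> i \<omega>))"
    and "M.expectation (\<lambda>\<omega>. real (\<tau> i \<omega>) * indicator B (\<theta> i \<omega>)) = (LINT x:B|\<mu>. exp_tau n (g x))"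
    by (simp_all add: nn_integral_eq_integrable)
qed

lemma expectation_cycle_length:
  assumes i: "1 \<le> i"
  shows "M.expectation (\<lambda>\<omega>. real (\<tau> i \<omega>)) = (\<integral>x. exp_tau n (g x) \<partial>\<mu>)"
proof -
  have "M.expectation (\<lambda>\<omega>. real (\<tau> i \<omega>)) = M.expectation (\<lambda>\<omega>. real (\<tau> i \<omega>) * indicator (space \<mu>) (\<theta> i \<omega>))"
    using measurable_space[OF measurable_cycle(1)[OF i]] by (intro Bochner_Integration.integral_cong) auto
  also have "\<dots> = (LINT x:space \<mu>|\<mu>. exp_tau n (g x))"
    by (rule expectation_cycle_reward(2)[OF i sets.top])
  also have "\<dots> = (\<integral>x. exp_tau n (g x) \<partial>\<mu>)"
    by (rule set_integral_space[OF integrable_exp_tau])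
  finally show ?thesis .
qed

lemma cycle_length_second_moment:
  assumes i: "1 \<le> i"
  defines "V \<equiv> \<Sum>k. real k ^ 2 * (\<Sum>E\<in>Pow (all_edges n). ret_prob n E k)"
  shows "integrable M (\<lambda>\<omega>. (real (\<tau> i \<omega>))\<^sup>2)" and "M.expectation (\<lambda>\<omega>. (real (\<tau> i \<omega>))\<^sup>2) \<le> V"
proof -
  note [measurable] = measurable_cycle[OF i]
  have "(\<integral>\<^sup>+\<omega>. ennreal ((real (\<tau> i \<omega>))\<^sup>2) \<partial>M)
      = (\<integral>\<^sup>+\<omega>. ennreal (real (\<tau> i \<omega>) ^ 2) * indicator (space \<mu>) (\<theta> i \<omega>) \<partial>M)"
    using measurable_space[OF measurable_cycle(1)[OF i]] by (intro nn_integral_cong) simp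
  also have "\<dots> = (\<integral>\<^sup>+x\<in>space \<mu>. (\<Sum>k. ennreal (real k ^ 2) * ennreal (tau_dist n (g x) k)) \<partial>\<mu>)"
    by (rule nn_integral_cycle[OF i sets.top])
  also have "\<dots> \<le> (\<integral>\<^sup>+x\<in>space \<mu>. ennreal V \<partial>\<mu>)"
    using g_range tau_second_moment_le[OF n] unfolding V_def
    by (intro nn_integral_mono) (simp split: split_indicator)
  also have "\<dots> = ennreal V" by (simp add: mu.emeasure_space_1)
  finally have nn: "(\<integral>\<^sup>+\<omega>. ennreal ((real (\<tau> i \<omega>))\<^sup>2) \<partial>M) \<le> ennreal V" .
  show "integrable M (\<lambda>\<omega>. (real (\<tau> i \<omega>))\<^sup>2)"
    using le_less_trans[OF nn ennreal_less_top] by (intro integrableI_nonneg) auto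
  have "V \<ge> 0"
    unfolding V_def using summable_power2_mult_sum_ret_prob[OF n]
    by (rule suminf_nonneg) (simp add: sum_nonneg ret_prob_nonneg)
  then show "M.expectation (\<lambda>\<omega>. (real (\<tau> i \<omega>))\<^sup>2) \<le> V"
    using nn by (simp add: integral_eq_nn_integral enn2real_leI)
qed

lemma AE_cycle_length_ge_1:
  assumes i: "1 \<le> i"
  shows "AE \<omega> in M. 1 \<le> \<tau> i \<omega>"
proof -
  note [measurable] = measurable_cycle[OF i]
  have "measure M {\<omega> \<in> space M. \<theta> i \<omega> \<in> space \<mu> \<and> \<tau> i \<omega> = 0} = 0"
    using joint_law[OF i sets.top, of 0] by (simp add: tau_dist_0 set_lebesgue_integral_def)
  then have "{\<omega> \<in> space M. \<theta> i \<omega> \<in> space \<mu> \<and> \<tau> i \<omega> = 0} \<in> null_sets M"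
    by (simp add: null_sets_def M.emeasure_eq_measure)
  from AE_not_in[OF this] show ?thesis
  proof (rule AE_mp, intro AE_I2 impI)
    fix \<omega> assume "\<omega> \<in> space M" "\<omega> \<notin> {\<omega> \<in> space M. \<theta> i \<omega> \<in> space \<mu> \<and> \<tau> i \<omega> = 0}"
    then show "1 \<le> \<tau> i \<omega>" using measurable_space[OF measurable_cycle(1)[OF i]] by auto
  qed
qed

end

theorem proposition1:
  fixes n :: nat
    and M :: "'m measure" and \<mu> :: "'a measure"
    and g :: "'a \<Rightarrow> real"
    and \<theta> :: "nat \<Rightarrow> 'm \<Rightarrow> 'a" and \<tau> :: "nat \<Rightarrow> 'm \<Rightarrow> nat"
  assumes n2: "n \<ge> 2"
    and M_prob: "prob_space M"
    and mu_prob: "prob_space \<mu>"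
    and g_meas: "g \<in> borel_measurable \<mu>"
    and g_range: "\<And>x. x \<in> space \<mu> \<Longrightarrow> 0 < g x \<and> g x \<le> 1"
    and indep: "prob_space.indep_vars M (\<lambda>i. \<mu> \<Otimes>\<^sub>M count_space UNIV)
                  (\<lambda>i \<omega>. (\<theta> i \<omega>, \<tau> i \<omega>)) {1..}"
    and joint_law: "\<And>i A k. i \<ge> 1 \<Longrightarrow> A \<in> sets \<mu> \<Longrightarrow>
                  measure M {\<omega> \<in> space M. \<theta> i \<omega> \<in> A \<and> \<tau> i \<omega> = k}
                  = set_lebesgue_integral \<mu> A (\<lambda>x. tau_dist n (g x) k)"
    and A: "A \<in> sets \<mu>"
  shows "AE \<omega> in M. (\<lambda>T. occupation (\<lambda>i. \<theta> i \<omega>) (\<lambda>i. \<tau> i \<omega>) A T)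
            \<longlonglongrightarrow> set_lebesgue_integral \<mu> A (\<lambda>x. exp_tau n (g x))
                / integral\<^sup>L \<mu> (\<lambda>x. exp_tau n (g x))"
proof -
  interpret er_return_cycles M \<mu> n g \<theta> \<tau>
    using M_prob mu_prob n2 g_meas indep joint_law
    by (intro er_return_cycles.intro er_return_cycles_axioms.intro) (auto dest: g_range)
  show ?thesis
    using indep A AE_cycle_length_ge_1 cycle_length_second_moment
      expectation_cycle_reward(2)[OF _ A] expectation_cycle_length
    by (rule M.AE_occupation_tendsto)
qed

end
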